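(* Let $a,b,\lambda,N\in\mathbb N$ and $$M_N(a,b,\lambda)=\int_{[-1/2,1/2]^N}\prod_{l=1}^N e^{\pi i\theta_l(a-b)}\bigl|1+e^{2\pi i\theta_l}\bigr|^{a+b}\prod_{1\le k<l\le N}\bigl|e^{2\pi i\theta_k}-e^{2\pi i\theta_l}\bigr|^{2\lambda}\,d\theta.$$ Then $$M_N(a,b,\lambda)=\sum_{\substack{I_{kl}=-\lambda\\ 1\le k<l\le N}}^{\lambda}(-1)^{\sum_{k<l}I_{kl}}\prod_{1\le k<l\le N}\binom{2\lambda}{\lambda+I_{kl}}\prod_{k=1}^N\binom{a+b}{a+\sum_{l\ne k}I_{kl}}.$$
   Context: The sum runs over all families of integers $I_{kl}\in\{-\lambda,\dots,\lambda\}$, one for each pair $1\le k<l\le N$, with the convention $I_{kl}:=-I_{lk}$ for $k>l$. Binomial coefficients $\binom{r}{j}$ with $j<0$ or $j>r$ are zero. *)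

theory Defs
  imports "HOL-Analysis.Analysis" "HOL-Probability.Probability"
begin

definition binom_int :: "nat \<Rightarrow> int \<Rightarrow> int" where
  "binom_int r j = (if 0 \<le> j \<and> j \<le> int r then int (r choose nat j) else 0)"

text \<open>Index pairs k<l with k,l in {0..<N} (0-based version of 1..N).\<close>
definition pairs :: "nat \<Rightarrow> (nat \<times> nat) set" where
  "pairs N = {(k, l). k < l \<and> l < N}"

definition Iext :: "(nat \<times> nat \<Rightarrow> int) \<Rightarrow> nat \<Rightarrow> nat \<Rightarrow> int" where
  "Iext I k l = (if k < l then I (k, l) else if l < k then - I (l, k) else 0)"

definition M :: "nat \<Rightarrow> nat \<Rightarrow> nat \<Rightarrow> nat \<Rightarrow> complex" where
  "M N a b lam =
     (\<integral>\<theta>. indicator (PiE {..<N} (\<lambda>_. {-1/2..1/2::real})) \<theta> *\<^sub>R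
        ((\<Prod>l<N. cis (pi * \<theta> l * (real a - real b)) *
            of_real (cmod (1 + cis (2 * pi * \<theta> l)) ^ (a + b))) *
         (\<Prod>(k, l)\<in>pairs N.
            of_real (cmod (cis (2 * pi * \<theta> k) - cis (2 * pi * \<theta> l)) ^ (2 * lam))))
      \<partial>(PiM {..<N} (\<lambda>_. lborel)))"

end

theory Submission
  imports Defs
begin

text \<open>Every factor of the integrand is a trigonometric polynomial. On \<open>[-1/2, 1/2]\<close> the
  one-variable weight equals \<open>e^{-2\<pi>ib\<theta>} (1 + e^{2\<pi>i\<theta>})^{a+b}\<close>, and with
  \<open>\<phi> = 2\<pi>(\<theta>\<^sub>k - \<theta>\<^sub>l)\<close> the chord factor is
  \<open>|e^{2\<pi>i\<theta>\<^sub>k} - e^{2\<pi>i\<theta>\<^sub>l}|^{2\<lambda>} = (-1)^\<lambda> e^{-i\<lambda>\<phi>} (1 - e^{i\<phi>})^{2\<lambda>}\<close>.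
  Expanding every chord factor binomially and multiplying out indexes the terms by the families
  \<open>I\<^sub>k\<^sub>l\<close>; each term factorises over the variables, \<open>\<theta>\<^sub>k\<close> carrying the frequency
  \<open>\<Sum>\<^sub>l\<^sub>\<noteq>\<^sub>k I\<^sub>k\<^sub>l\<close>, and orthogonality of the characters \<open>e^{2\<pi>in\<theta>}\<close> on
  \<open>[-1/2, 1/2]\<close> extracts from each weight the binomial coefficient of matching frequency.\<close>

lemma has_integral_cis_int:
  fixes n :: int
  shows "((\<lambda>t. cis (2 * pi * of_int n * t)) has_integral (if n = 0 then 1 else 0)) {-1/2..1/2::real}"
proof (cases "n = 0")
  case True
  then show ?thesis using has_integral_const_real[of "1::complex" "-1/2" "1/2"] by simp
next
  case False
  define c where "c = 2 * pi * of_int n"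
  have "c \<noteq> 0" using False by (simp add: c_def)
  define F where "F t = inverse (\<i> * of_real c) * cis (c * t)" for t
  have F_deriv: "(F has_vector_derivative cis (c * t)) (at t within S)" for t S
  proof -
    have "((\<lambda>t. cis (c * t)) has_derivative (\<lambda>h. (c * h) *\<^sub>R (\<i> * cis (c * t)))) (at t within S)"
      by (auto intro!: derivative_eq_intros)
    then have "(F has_derivative (\<lambda>h. inverse (\<i> * of_real c) * ((c * h) *\<^sub>R (\<i> * cis (c * t))))) (at t within S)"
      unfolding F_def by (rule has_derivative_mult_right)
    moreover have "(\<lambda>h. inverse (\<i> * of_real c) * ((c * h) *\<^sub>R (\<i> * cis (c * t)))) = (\<lambda>h. h *\<^sub>R cis (c * t))"
      using \<open>c \<noteq> 0\<close> by (auto simp: scaleR_conv_of_real field_simps)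
    ultimately show ?thesis by (simp add: has_vector_derivative_def)
  qed
  have "F (1/2) = F (-1/2)"
  proof -
    have "cis (c * (1/2)) = cis (c * (-1/2)) * cis (2 * pi * of_int n)"
      by (simp add: cis_mult c_def algebra_simps)
    then show ?thesis by (simp add: F_def)
  qed
  moreover have "((\<lambda>t. cis (c * t)) has_integral (F (1/2) - F (-1/2))) {-1/2..1/2}"
    by (rule fundamental_theorem_of_calculus) (auto intro: F_deriv)
  ultimately show ?thesis using False by (simp add: c_def)
qed

definition circle_weight :: "nat \<Rightarrow> nat \<Rightarrow> real \<Rightarrow> complex" where
  "circle_weight a b t =
     cis (pi * t * (real a - real b)) * of_real (cmod (1 + cis (2 * pi * t)) ^ (a + b))"

lemma one_plus_cis_half_angle:
  "1 + cis (2 * pi * t) = cis (pi * t) * of_real (2 * cos (pi * t))"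
proof -
  have "cis (pi * t) * of_real (2 * cos (pi * t)) = cis (pi * t) * (cis (pi * t) + cis (- (pi * t)))"
    by (simp add: complex_eq_iff)
  also have "\<dots> = cis (2 * pi * t) + 1"
    by (simp add: distrib_left cis_mult mult.assoc)
  finally show ?thesis by simp
qed

text \<open>The hypothesis on \<open>t\<close> gives \<open>cos (pi * t) \<ge> 0\<close>, so taking the modulus loses no sign.\<close>
lemma circle_weight_expansion:
  assumes "t \<in> {-1/2..1/2::real}"
  shows "circle_weight a b t =
    (\<Sum>j\<le>a+b. of_nat ((a+b) choose j) * cis (2 * pi * of_int (int j - int b) * t))"
proof -
  have "pi * (-1/2) \<le> pi * t" "pi * t \<le> pi * (1/2)"
    using assms by (intro mult_left_mono; simp)+
  then have "cos (pi * t) \<ge> 0" by (intro cos_ge_zero) auto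
  then have "cmod (1 + cis (2 * pi * t)) = 2 * cos (pi * t)"
    by (simp add: one_plus_cis_half_angle norm_mult)
  then have "of_real (cmod (1 + cis (2 * pi * t)) ^ (a + b)) = (cis (- (pi * t)) * (1 + cis (2 * pi * t))) ^ (a + b)"
    by (simp add: one_plus_cis_half_angle cis_mult flip: mult.assoc)
  also have "\<dots> = cis (- (pi * t)) ^ (a + b) * (\<Sum>j\<le>a+b. of_nat ((a+b) choose j) * cis (2 * pi * t) ^ j)"
    by (simp add: power_mult_distrib binomial_ring add.commute[of 1])
  finally have "circle_weight a b t = (\<Sum>j\<le>a+b. of_nat ((a+b) choose j) *
      (cis (pi * t * (real a - real b)) * cis (- (pi * t)) ^ (a + b) * cis (2 * pi * t) ^ j))"
    by (simp add: circle_weight_def sum_distrib_left algebra_simps)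
  also have "\<dots> = (\<Sum>j\<le>a+b. of_nat ((a+b) choose j) * cis (2 * pi * of_int (int j - int b) * t))"
  proof (rule sum.cong[OF refl])
    fix j
    have "cis (pi * t * (real a - real b)) * cis (- (pi * t)) ^ (a + b) * cis (2 * pi * t) ^ j
        = cis (pi * t * (real a - real b) + real (a + b) * (- (pi * t)) + real j * (2 * pi * t))"
      by (simp only: Complex.DeMoivre cis_mult)
    also have "pi * t * (real a - real b) + real (a + b) * (- (pi * t)) + real j * (2 * pi * t)
        = 2 * pi * of_int (int j - int b) * t"
      by (simp add: algebra_simps)
    finally show "of_nat ((a+b) choose j) * (cis (pi * t * (real a - real b)) * cis (- (pi * t)) ^ (a + b) * cis (2 * pi * t) ^ j)
      = of_nat ((a+b) choose j) * cis (2 * pi * of_int (int j - int b) * t)"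
      by simp
  qed
  finally show ?thesis .
qed

lemma binom_int_symmetric: "binom_int n j = binom_int n (int n - j)"
proof (cases "0 \<le> j \<and> j \<le> int n")
  case True
  then have "nat (int n - j) = n - nat j" "nat j \<le> n" by auto
  with True show ?thesis by (simp add: binom_int_def binomial_symmetric[of "nat j" n])
qed (auto simp: binom_int_def)

lemma sum_binomial_indicator:
  "(\<Sum>j\<le>n. of_nat (n choose j) * (if int j = m then 1 else 0)) = (of_int (binom_int n m) :: 'a::ring_1)"
proof (cases "0 \<le> m \<and> m \<le> int n")
  case True
  then have "(\<Sum>j\<le>n. of_nat (n choose j) * (if int j = m then 1 else 0))
      = (\<Sum>j\<le>n. if j = nat m then of_nat (n choose j) else (0::'a))"
    by (intro sum.cong) auto
  with True show ?thesis by (auto simp: binom_int_def)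
next
  case False
  then show ?thesis by (auto simp: binom_int_def intro!: sum.neutral)
qed

lemma has_integral_circle_weight:
  fixes S :: int
  shows "((\<lambda>t. circle_weight a b t * cis (2 * pi * of_int S * t)) has_integral
           of_int (binom_int (a + b) (int a + S))) {-1/2..1/2}"
proof -
  have "((\<lambda>t. \<Sum>j\<le>a+b. of_nat ((a+b) choose j) * cis (2 * pi * of_int (int j - int b + S) * t))
      has_integral (\<Sum>j\<le>a+b. of_nat ((a+b) choose j) * (if int j - int b + S = 0 then 1 else 0))) {-1/2..1/2}"
    by (intro has_integral_sum finite_atMost has_integral_mult_right has_integral_cis_int)
  also have "(\<Sum>j\<le>a+b. of_nat ((a+b) choose j) * (if int j - int b + S = 0 then 1 else 0))
      = (\<Sum>j\<le>a+b. of_nat ((a+b) choose j) * (if int j = int b - S then 1 else (0::complex)))"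
    by (intro sum.cong) auto
  also have "\<dots> = of_int (binom_int (a + b) (int b - S))"
    by (rule sum_binomial_indicator)
  also have "binom_int (a + b) (int b - S) = binom_int (a + b) (int a + S)"
    by (subst binom_int_symmetric) simp
  finally show ?thesis
  proof (rule has_integral_eq[rotated])
    fix t :: real
    assume "t \<in> {-1/2..1/2}"
    then have "circle_weight a b t * cis (2 * pi * of_int S * t) = (\<Sum>j\<le>a+b. of_nat ((a+b) choose j) *
        (cis (2 * pi * of_int (int j - int b) * t) * cis (2 * pi * of_int S * t)))"
      by (simp add: circle_weight_expansion sum_distrib_right mult.assoc)
    also have "\<dots> = (\<Sum>j\<le>a+b. of_nat ((a+b) choose j) * cis (2 * pi * of_int (int j - int b + S) * t))"
      by (simp add: cis_mult algebra_simps)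
    finally show "(\<Sum>j\<le>a+b. of_nat ((a+b) choose j) * cis (2 * pi * of_int (int j - int b + S) * t))
        = circle_weight a b t * cis (2 * pi * of_int S * t)" by simp
  qed
qed

lemma has_bochner_integral_circle_weight:
  "has_bochner_integral lborel
     (\<lambda>t. indicator {-1/2..1/2::real} t *\<^sub>R (circle_weight a b t * cis (2 * pi * of_int S * t)))
     (of_int (binom_int (a + b) (int a + S)))"
proof -
  have "set_integrable lborel {-1/2..1/2::real} (\<lambda>t. circle_weight a b t * cis (2 * pi * of_int S * t))"
    unfolding set_integrable_def
    by (rule borel_integrable_compact) (auto simp: circle_weight_def intro!: continuous_intros)
  with set_borel_integral_eq_integral[OF this] has_integral_circle_weight[of a b S] show ?thesis
    unfolding set_integrable_def set_lebesgue_integral_def has_bochner_integral_iff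
    by (simp add: integral_unique)
qed

lemma norm_cis_diff_power:
  "of_real (cmod (cis x - cis y) ^ (2 * n)) = (-1) ^ n * cis (- (real n * (x - y))) * (1 - cis (x - y)) ^ (2 * n)"
proof -
  define w where "w = cis (x - y)"
  define v where "v = cis (- (x - y))"
  have "v * w = 1" "cnj w = v"
    by (simp_all add: v_def w_def cis_mult cis_cnj)
  have "cis x - cis y = cis y * (w - 1)"
    by (simp add: w_def cis_mult algebra_simps)
  then have "cmod (cis x - cis y) = cmod (w - 1)"
    by (simp add: norm_mult)
  then have "of_real ((cmod (cis x - cis y))\<^sup>2) = (w - 1) * cnj (w - 1)"
    by (simp only: complex_norm_square)
  also have "\<dots> = - v * (1 - w)\<^sup>2"
    using \<open>v * w = 1\<close> \<open>cnj w = v\<close> by (simp add: power2_eq_square) algebra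
  finally have square: "of_real ((cmod (cis x - cis y))\<^sup>2) = - v * (1 - w)\<^sup>2" .
  have "of_real (cmod (cis x - cis y) ^ (2 * n)) = (of_real ((cmod (cis x - cis y))\<^sup>2) :: complex) ^ n"
    by (simp add: power_mult)
  also have "\<dots> = (- v * (1 - w)\<^sup>2) ^ n"
    by (simp only: square)
  also have "\<dots> = (-1) ^ n * v ^ n * (1 - w) ^ (2 * n)"
    by (simp only: minus_mult_left[of v] mult_minus1[symmetric, of v] power_mult_distrib power_mult)
  also have "v ^ n = cis (- (real n * (x - y)))"
    by (simp add: v_def Complex.DeMoivre algebra_simps)
  finally show ?thesis
    by (simp only: w_def)
qed

definition chord_coeff :: "nat \<Rightarrow> int \<Rightarrow> int" where
  "chord_coeff n i = (-1) ^ nat \<bar>i\<bar> * binom_int (2 * n) (int n + i)"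

lemma minus_one_power_nat_abs: "(-1::'a::ring_1) ^ nat \<bar>i\<bar> = (if even i then 1 else -1)"
proof -
  have "even (nat \<bar>i\<bar>) \<longleftrightarrow> even i" by (simp add: even_nat_iff)
  then show ?thesis by (simp add: minus_one_power_iff)
qed

lemma norm_cis_diff_power_expansion:
  "of_real (cmod (cis x - cis y) ^ (2 * n)) =
     (\<Sum>i\<in>{-int n..int n}. of_int (chord_coeff n i) * cis (of_int i * (x - y)))"
proof -
  have "of_real (cmod (cis x - cis y) ^ (2 * n)) =
      (\<Sum>k\<le>2*n. (-1) ^ n * cis (- (real n * (x - y))) * (of_nat (2 * n choose k) * (- cis (x - y)) ^ k))"
  proof -
    have "(1 - cis (x - y)) ^ (2 * n) = (- cis (x - y) + 1) ^ (2 * n)" by simp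
    then show ?thesis
      by (simp only: norm_cis_diff_power binomial_ring sum_distrib_left power_one mult_1_right)
  qed
  also have "\<dots> = (\<Sum>k\<le>2*n. of_int (chord_coeff n (int k - int n)) * cis (of_int (int k - int n) * (x - y)))"
  proof (rule sum.cong[OF refl])
    fix k
    assume "k \<in> {..2*n}"
    then have "even (int k - int n) \<longleftrightarrow> even (n + k)" "binom_int (2 * n) (int n + (int k - int n)) = int (2 * n choose k)"
      by (auto simp: binom_int_def)
    then have coeff: "chord_coeff n (int k - int n) = (-1) ^ n * (-1) ^ k * int (2 * n choose k)"
      by (simp add: chord_coeff_def minus_one_power_nat_abs minus_one_power_iff flip: power_add)
    have "- (real n * (x - y)) + real k * (x - y) = of_int (int k - int n) * (x - y)"
      by (simp add: algebra_simps)
    then have phase: "cis (- (real n * (x - y))) * cis (x - y) ^ k = cis (of_int (int k - int n) * (x - y))"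
      by (simp only: Complex.DeMoivre cis_mult)
    have "(-1) ^ n * cis (- (real n * (x - y))) * (of_nat (2 * n choose k) * (- cis (x - y)) ^ k)
        = (-1) ^ n * (-1) ^ k * of_nat (2 * n choose k) * (cis (- (real n * (x - y))) * cis (x - y) ^ k)"
      by (simp only: power_minus[of "cis (x - y)" k] mult_ac)
    then show "(-1) ^ n * cis (- (real n * (x - y))) * (of_nat (2 * n choose k) * (- cis (x - y)) ^ k)
        = of_int (chord_coeff n (int k - int n)) * cis (of_int (int k - int n) * (x - y))"
      by (simp add: coeff phase)
  qed
  also have "\<dots> = (\<Sum>i\<in>{-int n..int n}. of_int (chord_coeff n i) * cis (of_int i * (x - y)))"
    by (rule sum.reindex_bij_witness[of _ "\<lambda>i. nat (i + int n)" "\<lambda>k. int k - int n"]) auto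
  finally show ?thesis .
qed

lemma prod_cis: "finite A \<Longrightarrow> (\<Prod>x\<in>A. cis (f x)) = cis (\<Sum>x\<in>A. f x)"
  by (induction A rule: finite_induct) (auto simp: cis_mult)

lemma prod_minus_one_power_nat_abs:
  fixes f :: "'a \<Rightarrow> int"
  shows "finite A \<Longrightarrow> (\<Prod>x\<in>A. (-1::int) ^ nat \<bar>f x\<bar>) = (-1) ^ nat \<bar>\<Sum>x\<in>A. f x\<bar>"
  by (induction A rule: finite_induct) (auto simp: minus_one_power_nat_abs)

lemma finite_pairs: "finite (pairs N)"
  by (rule finite_subset[of _ "{..<N} \<times> {..<N}"]) (auto simp: pairs_def)

definition row_sum :: "nat \<Rightarrow> (nat \<times> nat \<Rightarrow> int) \<Rightarrow> nat \<Rightarrow> int" where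
  "row_sum N I k = (\<Sum>l \<in> {..<N} - {k}. Iext I k l)"

lemma sum_pairs_diff_eq_sum_row_sum:
  fixes x :: "nat \<Rightarrow> real"
  shows "(\<Sum>p\<in>pairs N. of_int (I p) * (x (fst p) - x (snd p))) = (\<Sum>k<N. of_int (row_sum N I k) * x k)"
proof -
  define g where "g k l = of_int (Iext I k l) * x k" for k l
  have "(\<Sum>k<N. of_int (row_sum N I k) * x k) = (\<Sum>(k, l)\<in>Sigma {..<N} (\<lambda>k. {..<N} - {k}). g k l)"
    by (simp add: row_sum_def g_def sum_distrib_right sum.Sigma)
  also have "Sigma {..<N} (\<lambda>k. {..<N} - {k}) = pairs N \<union> prod.swap ` pairs N"
    by (auto simp: pairs_def image_iff)
  also have "(\<Sum>(k, l)\<in>pairs N \<union> prod.swap ` pairs N. g k l)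
      = (\<Sum>(k, l)\<in>pairs N. g k l) + (\<Sum>(k, l)\<in>prod.swap ` pairs N. g k l)"
    by (rule sum.union_disjoint) (use finite_pairs in \<open>auto simp: pairs_def\<close>)
  also have "(\<Sum>(k, l)\<in>prod.swap ` pairs N. g k l) = (\<Sum>p\<in>pairs N. g (snd p) (fst p))"
    by (subst sum.reindex) (auto simp: case_prod_unfold)
  also have "(\<Sum>(k, l)\<in>pairs N. g k l) + (\<Sum>p\<in>pairs N. g (snd p) (fst p))
      = (\<Sum>p\<in>pairs N. of_int (I p) * (x (fst p) - x (snd p)))"
    unfolding sum.distrib[symmetric] case_prod_unfold
    by (rule sum.cong[OF refl]) (auto simp: g_def Iext_def pairs_def algebra_simps)
  finally show ?thesis ..
qed

lemma prod_chords_expansion: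
  "(\<Prod>(k, l)\<in>pairs N. of_real (cmod (cis (\<phi> k) - cis (\<phi> l)) ^ (2 * n))) =
     (\<Sum>I \<in> PiE (pairs N) (\<lambda>_. {- int n .. int n}).
        of_int (\<Prod>p\<in>pairs N. chord_coeff n (I p)) * cis (\<Sum>k<N. of_int (row_sum N I k) * \<phi> k))"
proof -
  have "(\<Prod>(k, l)\<in>pairs N. of_real (cmod (cis (\<phi> k) - cis (\<phi> l)) ^ (2 * n))) =
      (\<Prod>p\<in>pairs N. \<Sum>i\<in>{- int n .. int n}. of_int (chord_coeff n i) * cis (of_int i * (\<phi> (fst p) - \<phi> (snd p))))"
    by (simp only: case_prod_unfold norm_cis_diff_power_expansion)
  also have "\<dots> = (\<Sum>I \<in> PiE (pairs N) (\<lambda>_. {- int n .. int n}).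
      \<Prod>p\<in>pairs N. of_int (chord_coeff n (I p)) * cis (of_int (I p) * (\<phi> (fst p) - \<phi> (snd p))))"
    by (rule prod_sum_PiE) (auto simp: finite_pairs)
  also have "\<dots> = (\<Sum>I \<in> PiE (pairs N) (\<lambda>_. {- int n .. int n}).
      of_int (\<Prod>p\<in>pairs N. chord_coeff n (I p)) * cis (\<Sum>k<N. of_int (row_sum N I k) * \<phi> k))"
    by (simp add: prod.distrib prod_cis finite_pairs sum_pairs_diff_eq_sum_row_sum)
  finally show ?thesis .
qed

lemma weights_times_chords_expansion:
  "(\<Prod>l<N. circle_weight a b (\<theta> l)) *
   (\<Prod>(k, l)\<in>pairs N. of_real (cmod (cis (2 * pi * \<theta> k) - cis (2 * pi * \<theta> l)) ^ (2 * n))) =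
     (\<Sum>I \<in> PiE (pairs N) (\<lambda>_. {- int n .. int n}). of_int (\<Prod>p\<in>pairs N. chord_coeff n (I p)) *
        (\<Prod>k<N. circle_weight a b (\<theta> k) * cis (2 * pi * of_int (row_sum N I k) * \<theta> k)))"
  unfolding prod_chords_expansion
  by (simp add: sum_distrib_left prod.distrib prod_cis mult.left_commute mult.assoc)

lemma prod_indicator_eq_indicator_PiE:
  assumes "finite I" "\<theta> \<in> extensional I"
  shows "(\<Prod>i\<in>I. indicator B (\<theta> i) :: real) = indicator (PiE I (\<lambda>_. B)) \<theta>"
proof (cases "\<theta> \<in> PiE I (\<lambda>_. B)")
  case False
  with assms(2) obtain i where "i \<in> I" "\<theta> i \<notin> B"
    by (auto simp: PiE_def Pi_def)
  with assms(1) have "(\<Prod>i\<in>I. indicator B (\<theta> i) :: real) = 0"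
    by (intro prod_zero bexI) auto
  with False show ?thesis
    by simp
qed (auto simp: PiE_def Pi_def intro!: prod.neutral)

lemma indicator_PiE_scaleR_prod:
  fixes f :: "'i \<Rightarrow> 'b::{real_algebra_1, comm_ring_1}"
  assumes "finite I" "\<theta> \<in> extensional I"
  shows "indicator (PiE I (\<lambda>_. B)) \<theta> *\<^sub>R (\<Prod>i\<in>I. f i) = (\<Prod>i\<in>I. indicator B (\<theta> i) *\<^sub>R f i)"
  by (simp add: scaleR_conv_of_real prod.distrib flip: prod_indicator_eq_indicator_PiE[OF assms] of_real_prod)

lemma has_bochner_integral_cube_circle_weight:
  fixes S :: "nat \<Rightarrow> int"
  shows "has_bochner_integral (PiM {..<N} (\<lambda>_. lborel))
     (\<lambda>\<theta>. indicator (PiE {..<N} (\<lambda>_. {-1/2..1/2::real})) \<theta> *\<^sub>R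
        (\<Prod>k<N. circle_weight a b (\<theta> k) * cis (2 * pi * of_int (S k) * \<theta> k)))
     (of_int (\<Prod>k<N. binom_int (a + b) (int a + S k)))"
proof -
  interpret product_sigma_finite "\<lambda>_::nat. lborel :: real measure"
    by (simp add: product_sigma_finite_def lborel.sigma_finite_measure_axioms)
  define G where "G k t = indicator {-1/2..1/2::real} t *\<^sub>R
    (circle_weight a b t * cis (2 * pi * of_int (S k) * t))" for k t
  have G: "has_bochner_integral lborel (G k) (of_int (binom_int (a + b) (int a + S k)))" for k
    unfolding G_def by (rule has_bochner_integral_circle_weight)
  have "has_bochner_integral (PiM {..<N} (\<lambda>_. lborel)) (\<lambda>\<theta>. \<Prod>k<N. G k (\<theta> k))
      (\<Prod>k<N. of_int (binom_int (a + b) (int a + S k)))"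
    using G by (simp add: has_bochner_integral_iff product_integrable_prod product_integral_prod)
  then show ?thesis
  proof (rule has_bochner_integral_cong[THEN iffD1, rotated -1])
    fix \<theta> :: "nat \<Rightarrow> real"
    assume "\<theta> \<in> space (PiM {..<N} (\<lambda>_. lborel))"
    then have "\<theta> \<in> extensional {..<N}"
      by (simp add: space_PiM PiE_def)
    then show "(\<Prod>k<N. G k (\<theta> k)) = indicator (PiE {..<N} (\<lambda>_. {-1/2..1/2::real})) \<theta> *\<^sub>R
        (\<Prod>k<N. circle_weight a b (\<theta> k) * cis (2 * pi * of_int (S k) * \<theta> k))"
      by (simp add: G_def indicator_PiE_scaleR_prod)
  qed simp_all
qed

theorem proposition4:
  fixes a b lam N :: nat
  shows "M N a b lam =
    of_int (\<Sum>I \<in> PiE (pairs N) (\<lambda>_. {- int lam .. int lam}).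
       (-1) ^ nat \<bar>\<Sum>p\<in>pairs N. I p\<bar> *
       (\<Prod>p\<in>pairs N. binom_int (2 * lam) (int lam + I p)) *
       (\<Prod>k<N. binom_int (a + b) (int a + (\<Sum>l \<in> {..<N} - {k}. Iext I k l))))"
proof -
  define J where "J = PiE (pairs N) (\<lambda>_. {- int lam .. int lam})"
  define c where "c I = (\<Prod>p\<in>pairs N. chord_coeff lam (I p))" for I
  define f where "f I \<theta> = indicator (PiE {..<N} (\<lambda>_. {-1/2..1/2::real})) \<theta> *\<^sub>R
    (\<Prod>k<N. circle_weight a b (\<theta> k) * cis (2 * pi * of_int (row_sum N I k) * \<theta> k))" for I \<theta>
  have "M N a b lam = (\<integral>\<theta>. (\<Sum>I\<in>J. of_int (c I) * f I \<theta>) \<partial>PiM {..<N} (\<lambda>_. lborel))"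
    unfolding M_def circle_weight_def[symmetric] weights_times_chords_expansion
    by (simp add: J_def c_def f_def scaleR_sum_right)
  also have "\<dots> = (\<Sum>I\<in>J. of_int (c I) * of_int (\<Prod>k<N. binom_int (a + b) (int a + row_sum N I k)))"
    unfolding f_def
    by (intro has_bochner_integral_integral_eq has_bochner_integral_sum has_bochner_integral_mult_right
        has_bochner_integral_cube_circle_weight)
  finally show ?thesis
    by (simp add: J_def c_def chord_coeff_def row_sum_def prod.distrib prod_minus_one_power_nat_abs finite_pairs)
qed

end
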